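(* Let $\alpha\in\mathbb{C}$, $\beta\in\mathbb{C}\setminus\mathbb{Z}$, and let $D\in\mathrm{Der}(\mathcal{W},\mathcal{F}_\alpha\otimes\mathcal{F}_\beta)_0$ satisfy $D(L_0)=0$, $D(L_1)=c\,v_{l+1}\otimes v_{-l}$ for some $l\in\mathbb{Z}$ and $c\in\mathbb{C}$, and $D(L_{-1})=0$. Then $D=0$.
   Context: The Witt algebra $\mathcal{W}$ has basis $\{L_n\mid n\in\mathbb{Z}\}$ and bracket $[L_m,L_n]=(m-n)L_{m+n}$. $\mathcal{F}_\alpha$ has basis $\{v_n\}$ with $L_m\cdot v_n=-(\alpha m+n)v_{m+n}$; $\mathcal{F}_\alpha\otimes\mathcal{F}_\beta$ is a $\mathcal{W}$-module via $L_m\cdot(v_i\otimes v_j)=-(i+\alpha m)v_{m+i}\otimes v_j-(j+\beta m)v_i\otimes v_{m+j}$, graded by $(\mathcal{F}_\alpha\otimes\mathcal{F}_\beta)_k=\bigoplus_i\mathbb{C}\,v_i\otimes v_{k-i}$. $\mathrm{Der}(\mathcal{W},\mathcal{F}_\alpha\otimes\mathcal{F}_\beta)_0$ is the space of linear maps $D$ with $D([x,y])=x\cdot D(y)-y\cdot D(x)$ and $D(L_m)\in(\mathcal{F}_\alpha\otimes\mathcal{F}_\beta)_m$ for all $m$. *)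

theory Defs
  imports Complex_Main
begin

text \<open>Elements of the Witt algebra W are finitely supported coefficient functions
  x :: int \<Rightarrow> complex (x = sum of x n L_n). Elements of F_alpha (x) F_beta are finitely
  supported u :: int \<times> int \<Rightarrow> complex (u = sum of u(i,j) v_i (x) v_j).\<close>

definition fin_supp :: "('a \<Rightarrow> complex) \<Rightarrow> bool" where
  "fin_supp f \<longleftrightarrow> finite {a. f a \<noteq> 0}"

definition witt_L :: "int \<Rightarrow> int \<Rightarrow> complex" where
  "witt_L m = (\<lambda>k. if k = m then 1 else 0)"

definition tens_v :: "int \<Rightarrow> int \<Rightarrow> int \<times> int \<Rightarrow> complex" where
  "tens_v i j = (\<lambda>p. if p = (i, j) then 1 else 0)"

text \<open>Bracket [x,y], bilinear extension of [L_m,L_n] = (m-n) L_(m+n).\<close>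
definition witt_bracket :: "(int \<Rightarrow> complex) \<Rightarrow> (int \<Rightarrow> complex) \<Rightarrow> int \<Rightarrow> complex" where
  "witt_bracket x y = (\<lambda>k. \<Sum>m\<in>{m. x m \<noteq> 0}. x m * y (k - m) * of_int (m - (k - m)))"

text \<open>Action of L_m on the tensor module: linear extension of
  L_m (v_i (x) v_j) = -(i + alpha m) v_(m+i) (x) v_j - (j + beta m) v_i (x) v_(m+j).\<close>
definition tens_act_L :: "complex \<Rightarrow> complex \<Rightarrow> int \<Rightarrow> (int \<times> int \<Rightarrow> complex) \<Rightarrow> int \<times> int \<Rightarrow> complex" where
  "tens_act_L \<alpha> \<beta> m u = (\<lambda>(p, q).
      - (of_int (p - m) + \<alpha> * of_int m) * u (p - m, q)
      - (of_int (q - m) + \<beta> * of_int m) * u (p, q - m))"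

definition tens_act :: "complex \<Rightarrow> complex \<Rightarrow> (int \<Rightarrow> complex) \<Rightarrow> (int \<times> int \<Rightarrow> complex) \<Rightarrow> int \<times> int \<Rightarrow> complex" where
  "tens_act \<alpha> \<beta> x u = (\<lambda>p. \<Sum>m\<in>{m. x m \<noteq> 0}. x m * tens_act_L \<alpha> \<beta> m u p)"

text \<open>Der(W, F_alpha (x) F_beta)_0: linear maps D on W (values outside W irrelevant),
  landing in the module, satisfying the derivation rule and of degree 0.\<close>
definition is_der0 :: "complex \<Rightarrow> complex \<Rightarrow> ((int \<Rightarrow> complex) \<Rightarrow> (int \<times> int \<Rightarrow> complex)) \<Rightarrow> bool" where
  "is_der0 \<alpha> \<beta> D \<longleftrightarrow>
     (\<forall>x. fin_supp x \<longrightarrow> fin_supp (D x)) \<and>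
     (\<forall>a b x y. fin_supp x \<longrightarrow> fin_supp y \<longrightarrow> D (\<lambda>k. a * x k + b * y k) = (\<lambda>p. a * D x p + b * D y p)) \<and>
     (\<forall>x y. fin_supp x \<longrightarrow> fin_supp y \<longrightarrow>
        D (witt_bracket x y) = (\<lambda>p. tens_act \<alpha> \<beta> x (D y) p - tens_act \<alpha> \<beta> y (D x) p)) \<and>
     (\<forall>m i j. D (witt_L m) (i, j) \<noteq> 0 \<longrightarrow> i + j = m)"

end

theory Submission
  imports Defs
begin

text \<open>Since \<open>D(L\<^sub>-\<^sub>1) = 0\<close>, the derivation rule for \<open>[L\<^sub>m\<^sub>+\<^sub>1, L\<^sub>-\<^sub>1]\<close> puts \<open>D(L\<^sub>m\<^sub>+\<^sub>1)\<close> into the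
  kernel of \<open>L\<^sub>-\<^sub>1\<close> once \<open>D(L\<^sub>m) = 0\<close>; symmetrically, once \<open>D(L\<^sub>1) = 0\<close>, going down puts \<open>D(L\<^sub>m\<^sub>-\<^sub>1)\<close>
  into the kernel of \<open>L\<^sub>1\<close>. Both kernels are trivial on finitely supported vectors when
  \<open>\<beta> \<notin> \<int>\<close>: at an extremal first index of the support the action of \<open>L\<^sub>\<plusminus>\<^sub>1\<close> reduces to
  multiplication by \<open>-(j \<mp> \<beta>)\<close>. So \<open>D\<close> vanishes on every \<open>L\<^sub>m\<close>, hence by linearity on \<open>W\<close>.\<close>

lemma fin_supp_witt_L: "fin_supp (witt_L m)"
  unfolding fin_supp_def witt_L_def by simp

lemma support_witt_L: "{k. witt_L m k \<noteq> 0} = {m}"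
  unfolding witt_L_def by auto

lemma witt_bracket_L_L:
  "witt_bracket (witt_L m) (witt_L n) = (\<lambda>k. of_int (m - n) * witt_L (m + n) k)"
  unfolding witt_bracket_def support_witt_L by (auto simp: witt_L_def fun_eq_iff)

lemma tens_act_witt_L: "tens_act \<alpha> \<beta> (witt_L m) u = tens_act_L \<alpha> \<beta> m u"
  unfolding tens_act_def support_witt_L by (simp add: witt_L_def fun_eq_iff)

lemma tens_act_L_zero: "tens_act_L \<alpha> \<beta> m (\<lambda>_. 0) = (\<lambda>_. 0)"
  unfolding tens_act_L_def by auto

lemma of_int_minus_nonint_neq_0:
  assumes "\<beta> \<notin> \<int>" shows "of_int j - \<beta> \<noteq> 0"
  using assms by (metis Ints_of_int eq_iff_diff_eq_0)

lemma of_int_plus_nonint_neq_0: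
  assumes "\<beta> \<notin> \<int>" shows "of_int j + \<beta> \<noteq> 0"
proof
  assume "of_int j + \<beta> = 0"
  then have "\<beta> = of_int (- j)" by (simp add: add_eq_0_iff)
  then show False using assms by (metis Ints_of_int)
qed

lemma tens_act_L_minus_one_injective:
  assumes "\<beta> \<notin> \<int>" and "fin_supp u" and "tens_act_L \<alpha> \<beta> (-1) u = (\<lambda>_. 0)"
  shows "u = (\<lambda>_. 0)"
proof (rule ccontr)
  assume "u \<noteq> (\<lambda>_. 0)"
  define S where "S = {a. u a \<noteq> 0}"
  have "finite S" using \<open>fin_supp u\<close> unfolding fin_supp_def S_def .
  moreover have "S \<noteq> {}" using \<open>u \<noteq> (\<lambda>_. 0)\<close> unfolding S_def by auto
  ultimately have "Max (fst ` S) \<in> fst ` S" by simp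
  then obtain i j where "(i, j) \<in> S" and i_max: "i = Max (fst ` S)" by force
  have "u (i + 1, j - 1) = 0"
  proof (rule ccontr)
    assume "u (i + 1, j - 1) \<noteq> 0"
    then have "i + 1 \<in> fst ` S" unfolding S_def by force
    then have "i + 1 \<le> i" unfolding i_max using \<open>finite S\<close> by (meson Max_ge finite_imageI)
    then show False by simp
  qed
  moreover have "tens_act_L \<alpha> \<beta> (-1) u (i, j - 1) = 0" using assms(3) by simp
  ultimately have "- (of_int j - \<beta>) * u (i, j) = 0"
    unfolding tens_act_L_def by (simp add: algebra_simps)
  then show False
    using \<open>(i, j) \<in> S\<close> of_int_minus_nonint_neq_0[OF assms(1), of j] unfolding S_def by simp
qed

lemma tens_act_L_one_injective:
  assumes "\<beta> \<notin> \<int>" and "fin_supp u" and "tens_act_L \<alpha> \<beta> 1 u = (\<lambda>_. 0)"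
  shows "u = (\<lambda>_. 0)"
proof (rule ccontr)
  assume "u \<noteq> (\<lambda>_. 0)"
  define S where "S = {a. u a \<noteq> 0}"
  have "finite S" using \<open>fin_supp u\<close> unfolding fin_supp_def S_def .
  moreover have "S \<noteq> {}" using \<open>u \<noteq> (\<lambda>_. 0)\<close> unfolding S_def by auto
  ultimately have "Min (fst ` S) \<in> fst ` S" by simp
  then obtain i j where "(i, j) \<in> S" and i_min: "i = Min (fst ` S)" by force
  have "u (i - 1, j + 1) = 0"
  proof (rule ccontr)
    assume "u (i - 1, j + 1) \<noteq> 0"
    then have "i - 1 \<in> fst ` S" unfolding S_def by force
    then have "i \<le> i - 1" unfolding i_min using \<open>finite S\<close> by (meson Min_le finite_imageI)
    then show False by simp
  qed
  moreover have "tens_act_L \<alpha> \<beta> 1 u (i, j + 1) = 0" using assms(3) by simp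
  ultimately have "- (of_int j + \<beta>) * u (i, j) = 0"
    unfolding tens_act_L_def by (simp add: algebra_simps add_eq_0_iff)
  then have "of_int j + \<beta> = 0 \<or> u (i, j) = 0"
    by (simp only: mult_minus_left neg_equal_0_iff_equal mult_eq_0_iff)
  then show False
    using \<open>(i, j) \<in> S\<close> of_int_plus_nonint_neq_0[OF assms(1), of j] unfolding S_def by blast
qed

lemma der0_fin_supp_L:
  assumes "is_der0 \<alpha> \<beta> D" shows "fin_supp (D (witt_L m))"
  using assms fin_supp_witt_L unfolding is_der0_def by blast

lemma der0_linear:
  assumes "is_der0 \<alpha> \<beta> D" and "fin_supp x" and "fin_supp y"
  shows "D (\<lambda>k. a * x k + b * y k) = (\<lambda>p. a * D x p + b * D y p)"
  using assms unfolding is_der0_def by blast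

lemma der0_bracket_L_L:
  assumes "is_der0 \<alpha> \<beta> D"
  shows "(\<lambda>p. of_int (m - n) * D (witt_L (m + n)) p) =
    (\<lambda>p. tens_act_L \<alpha> \<beta> m (D (witt_L n)) p - tens_act_L \<alpha> \<beta> n (D (witt_L m)) p)"
proof -
  have scale: "D (\<lambda>k. a * witt_L j k) = (\<lambda>p. a * D (witt_L j) p)" for a j
    using der0_linear[OF assms fin_supp_witt_L[of j] fin_supp_witt_L[of j], where a=a and b=0]
    by simp
  have "D (witt_bracket (witt_L m) (witt_L n)) =
    (\<lambda>p. tens_act \<alpha> \<beta> (witt_L m) (D (witt_L n)) p - tens_act \<alpha> \<beta> (witt_L n) (D (witt_L m)) p)"
    using assms fin_supp_witt_L unfolding is_der0_def by blast
  then show ?thesis unfolding witt_bracket_L_L tens_act_witt_L scale .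
qed

lemma der0_vanishes_L_nonneg:
  assumes "\<beta> \<notin> \<int>" and D: "is_der0 \<alpha> \<beta> D"
    and "D (witt_L 0) = (\<lambda>_. 0)" and "D (witt_L (-1)) = (\<lambda>_. 0)"
  shows "D (witt_L (int k)) = (\<lambda>_. 0)"
proof (induction k)
  case 0
  then show ?case using assms(3) by simp
next
  case (Suc k)
  have "(\<lambda>p. of_int (int (Suc k) - (-1)) * D (witt_L (int (Suc k) + -1)) p) =
    (\<lambda>p. tens_act_L \<alpha> \<beta> (int (Suc k)) (D (witt_L (-1))) p
       - tens_act_L \<alpha> \<beta> (-1) (D (witt_L (int (Suc k)))) p)"
    by (rule der0_bracket_L_L[OF D])
  then have "tens_act_L \<alpha> \<beta> (-1) (D (witt_L (int (Suc k)))) = (\<lambda>_. 0)"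
    using Suc assms(4) by (simp add: tens_act_L_zero fun_eq_iff)
  then show ?case
    using tens_act_L_minus_one_injective[OF assms(1) der0_fin_supp_L[OF D]] by blast
qed

lemma der0_vanishes_L_nonpos:
  assumes "\<beta> \<notin> \<int>" and D: "is_der0 \<alpha> \<beta> D"
    and "D (witt_L 0) = (\<lambda>_. 0)" and "D (witt_L 1) = (\<lambda>_. 0)"
  shows "D (witt_L (- int k)) = (\<lambda>_. 0)"
proof (induction k)
  case 0
  then show ?case using assms(3) by simp
next
  case (Suc k)
  have "(\<lambda>p. of_int (- int (Suc k) - 1) * D (witt_L (- int (Suc k) + 1)) p) =
    (\<lambda>p. tens_act_L \<alpha> \<beta> (- int (Suc k)) (D (witt_L 1)) p
       - tens_act_L \<alpha> \<beta> 1 (D (witt_L (- int (Suc k)))) p)"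
    by (rule der0_bracket_L_L[OF D])
  moreover have "- int (Suc k) + 1 = - int k" by simp
  ultimately have "tens_act_L \<alpha> \<beta> 1 (D (witt_L (- int (Suc k)))) = (\<lambda>_. 0)"
    using Suc assms(4) by (simp add: tens_act_L_zero fun_eq_iff)
  then show ?case
    using tens_act_L_one_injective[OF assms(1) der0_fin_supp_L[OF D]] by blast
qed

lemma linear_vanishing_on_witt_L:
  assumes lin: "\<And>a b x y. fin_supp x \<Longrightarrow> fin_supp y \<Longrightarrow>
      D (\<lambda>k. a * x k + b * y k) = (\<lambda>p. a * D x p + b * D y p)"
    and basis: "\<And>m. D (witt_L m) = (\<lambda>_. 0)"
    and "fin_supp x"
  shows "D x = (\<lambda>_. 0)"
proof -
  have "{k. x k \<noteq> 0} \<subseteq> S \<Longrightarrow> D x = (\<lambda>_. 0)" if "finite S" for S x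
    using that
  proof (induction S arbitrary: x rule: finite_induct)
    case empty
    then have "x = (\<lambda>k. 0 * witt_L 0 k + 0 * witt_L 0 k)" by auto
    then show ?case using lin[OF fin_supp_witt_L fin_supp_witt_L, of 0 0 0 0] basis by simp
  next
    case (insert s S)
    define x' where "x' = x(s := 0)"
    have supp_x': "{k. x' k \<noteq> 0} \<subseteq> S" using insert.prems unfolding x'_def by auto
    then have "fin_supp x'" unfolding fin_supp_def using insert.hyps(1) finite_subset by blast
    have x_split: "x = (\<lambda>k. 1 * x' k + x s * witt_L s k)"
      unfolding x'_def witt_L_def by auto
    have "D x = (\<lambda>p. 1 * D x' p + x s * D (witt_L s) p)"
      by (subst x_split) (rule lin[OF \<open>fin_supp x'\<close> fin_supp_witt_L])
    then show ?case using insert.IH[OF supp_x'] basis by simp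
  qed
  then show ?thesis using \<open>fin_supp x\<close> unfolding fin_supp_def by blast
qed

theorem lemmaL1p10:
  fixes \<alpha> \<beta> c :: complex and l :: int
    and D :: "(int \<Rightarrow> complex) \<Rightarrow> (int \<times> int \<Rightarrow> complex)"
  assumes "\<beta> \<notin> \<int>"
    and "is_der0 \<alpha> \<beta> D"
    and "D (witt_L 0) = (\<lambda>_. 0)"
    and "D (witt_L 1) = (\<lambda>p. c * tens_v (l + 1) (- l) p)"
    and "D (witt_L (-1)) = (\<lambda>_. 0)"
  shows "\<forall>x. fin_supp x \<longrightarrow> D x = (\<lambda>_. 0)"
proof -
  note nonneg = der0_vanishes_L_nonneg[OF assms(1,2,3,5)]
  have "D (witt_L 1) = (\<lambda>_. 0)" using nonneg[of 1] by simp
  note nonpos = der0_vanishes_L_nonpos[OF assms(1,2,3) this]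
  have "D (witt_L m) = (\<lambda>_. 0)" for m
    using nonneg[of "nat m"] nonpos[of "nat (- m)"] by (cases "m \<ge> 0") simp_all
  then show ?thesis using linear_vanishing_on_witt_L der0_linear[OF assms(2)] by blast
qed

end
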